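(* For every integer $n\ge 3$, let $\kappa(K_n\times K_n)$ denote the largest integer $k$ such that $K_n\times K_n$ has a weak $k$-resolving set. Then $$\kappa(K_n\times K_n)=\begin{cases}6, & n=3;\\ 2n+2, & n\ge 4.\end{cases}$$
   Context: $K_n\times K_n$ denotes the direct product of two complete graphs on $n$ vertices: its vertex set is $V=[n]\times[n]$ (where $[n]=\{1,\dots,n\}$), and $(i,j)$ is adjacent to $(i',j')$ if and only if $i\neq i'$ and $j\ne j'$. For a connected graph $G$ with distance $d_G$, vertices $x,y,z$ and a set $S\subseteq V(G)$, let $\Delta_z(x,y)=|d_G(x,z)-d_G(y,z)|$ and $\Delta_S(x,y)=\sum_{z\in S}\Delta_z(x,y)$. For an integer $k\ge1$, a set $S\subseteq V(G)$ is a weak $k$-resolving set of $G$ if $\Delta_S(x,y)\ge k$ for every two distinct vertices $x,y\in V(G)$. *)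

theory Defs
  imports Main
begin

definition edge_rel :: "'a set \<Rightarrow> ('a \<Rightarrow> 'a \<Rightarrow> bool) \<Rightarrow> ('a \<times> 'a) set" where
  "edge_rel V E = {(u, v). u \<in> V \<and> v \<in> V \<and> E u v}"

definition gdist :: "'a set \<Rightarrow> ('a \<Rightarrow> 'a \<Rightarrow> bool) \<Rightarrow> 'a \<Rightarrow> 'a \<Rightarrow> nat" where
  "gdist V E x y = (LEAST k. (x, y) \<in> (edge_rel V E) ^^ k)"

definition Delta_set :: "'a set \<Rightarrow> ('a \<Rightarrow> 'a \<Rightarrow> bool) \<Rightarrow> 'a set \<Rightarrow> 'a \<Rightarrow> 'a \<Rightarrow> int" where
  "Delta_set V E S x y =
     (\<Sum>z\<in>S. \<bar>int (gdist V E x z) - int (gdist V E y z)\<bar>)"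

definition weak_k_resolving :: "'a set \<Rightarrow> ('a \<Rightarrow> 'a \<Rightarrow> bool) \<Rightarrow> nat \<Rightarrow> 'a set \<Rightarrow> bool" where
  "weak_k_resolving V E k S \<longleftrightarrow> k \<ge> 1 \<and> S \<subseteq> V \<and>
     (\<forall>x\<in>V. \<forall>y\<in>V. x \<noteq> y \<longrightarrow> Delta_set V E S x y \<ge> int k)"

definition kappa :: "'a set \<Rightarrow> ('a \<Rightarrow> 'a \<Rightarrow> bool) \<Rightarrow> nat" where
  "kappa V E = (GREATEST k. \<exists>S. weak_k_resolving V E k S)"

text \<open>K_n x K_n (direct product of complete graphs) on [n] x [n].\<close>
definition KK_vertices :: "nat \<Rightarrow> (nat \<times> nat) set" where
  "KK_vertices n = {1..n} \<times> {1..n}"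

definition KK_adj :: "nat \<times> nat \<Rightarrow> nat \<times> nat \<Rightarrow> bool" where
  "KK_adj u v \<longleftrightarrow> fst u \<noteq> fst v \<and> snd u \<noteq> snd v"

end

(*
  For n \<ge> 3 any two vertices of K_n \<times> K_n have a common neighbour, so distances are 0, 1
  (adjacent) or 2. As Delta_S(x, y) only grows with S, kappa is the minimum of Delta_V(x, y)
  over pairs of distinct vertices. For two vertices in a common row, every vertex of the two
  columns through them contributes 1, and they themselves contribute 2 each: 2n + 2. For
  adjacent x = (a, b), y = (c, d), every vertex on rows a, c or columns b, d contributes 1,
  except the corners (a, d), (c, b), which contribute 0: 4n - 6. Hence kappa = min(2n + 2,
  4n - 6), which is 6 for n = 3 and 2n + 2 for n \<ge> 4.
*)

theory Submission
  imports Defs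
begin

lemma gdist_self: "gdist V E x x = 0"
  by (simp add: gdist_def)

lemma gdist_eq_1:
  assumes "x \<in> V" "y \<in> V" "x \<noteq> y" "E x y"
  shows "gdist V E x y = 1"
  unfolding gdist_def
proof (rule Least_equality)
  show "(x, y) \<in> edge_rel V E ^^ 1"
    using assms by (simp add: edge_rel_def)
  show "1 \<le> k" if "(x, y) \<in> edge_rel V E ^^ k" for k
    using that \<open>x \<noteq> y\<close> by (cases k) auto
qed

lemma gdist_eq_2:
  assumes "x \<in> V" "y \<in> V" "x \<noteq> y" "\<not> E x y" "w \<in> V" "E x w" "E w y"
  shows "gdist V E x y = 2"
  unfolding gdist_def
proof (rule Least_equality)
  show "(x, y) \<in> edge_rel V E ^^ 2"
    using assms by (auto simp: edge_rel_def numeral_2_eq_2 relpow_Suc_I2)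
  show "2 \<le> k" if "(x, y) \<in> edge_rel V E ^^ k" for k
  proof (rule ccontr)
    assume "\<not> 2 \<le> k"
    then have "k = 0 \<or> k = 1" by auto
    then show False
      using that assms by (auto simp: edge_rel_def)
  qed
qed

lemma Delta_set_mono:
  assumes "finite T" "S \<subseteq> T"
  shows "Delta_set V E S x y \<le> Delta_set V E T x y"
  unfolding Delta_set_def using assms by (intro sum_mono2) auto

lemma kappa_eqI:
  assumes "finite V" "1 \<le> m"
    and lower: "\<And>x y. x \<in> V \<Longrightarrow> y \<in> V \<Longrightarrow> x \<noteq> y \<Longrightarrow> int m \<le> Delta_set V E V x y"
    and "x\<^sub>0 \<in> V" "y\<^sub>0 \<in> V" "x\<^sub>0 \<noteq> y\<^sub>0" "Delta_set V E V x\<^sub>0 y\<^sub>0 = int m"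
  shows "kappa V E = m"
  unfolding kappa_def
proof (rule Greatest_equality)
  show "\<exists>S. weak_k_resolving V E m S"
    using assms unfolding weak_k_resolving_def by blast
  show "k \<le> m" if "\<exists>S. weak_k_resolving V E k S" for k
  proof -
    from that obtain S where "S \<subseteq> V" "int k \<le> Delta_set V E S x\<^sub>0 y\<^sub>0"
      using assms unfolding weak_k_resolving_def by blast
    then have "int k \<le> Delta_set V E V x\<^sub>0 y\<^sub>0"
      using Delta_set_mono[OF \<open>finite V\<close>] by (meson order_trans)
    then show ?thesis
      using assms by simp
  qed
qed

lemma ex_avoiding_two:
  assumes "3 \<le> (n::nat)"
  obtains i where "i \<in> {1..n}" "i \<noteq> a" "i \<noteq> c"
proof -
  have "\<exists>i\<in>{1, 2, 3::nat}. i \<noteq> a \<and> i \<noteq> c" by auto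
  then obtain i where "i \<in> {1, 2, 3}" "i \<noteq> a" "i \<noteq> c" by blast
  then show ?thesis
    using assms by (intro that) auto
qed

lemma KK_common_neighbour:
  assumes "3 \<le> n" "x \<in> KK_vertices n" "y \<in> KK_vertices n"
  obtains w where "w \<in> KK_vertices n" "KK_adj x w" "KK_adj w y"
proof -
  obtain i where "i \<in> {1..n}" "i \<noteq> fst x" "i \<noteq> fst y"
    using ex_avoiding_two[OF assms(1)] .
  moreover obtain j where "j \<in> {1..n}" "j \<noteq> snd x" "j \<noteq> snd y"
    using ex_avoiding_two[OF assms(1)] .
  ultimately show ?thesis
    using that[of "(i, j)"] by (auto simp: KK_vertices_def KK_adj_def)
qed

definition kk_dist :: "nat \<times> nat \<Rightarrow> nat \<times> nat \<Rightarrow> nat" where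
  "kk_dist x y = (if x = y then 0 else if KK_adj x y then 1 else 2)"

lemma gdist_KK:
  assumes "3 \<le> n" "x \<in> KK_vertices n" "y \<in> KK_vertices n"
  shows "gdist (KK_vertices n) KK_adj x y = kk_dist x y"
proof -
  consider "x = y" | "x \<noteq> y" "KK_adj x y" | "x \<noteq> y" "\<not> KK_adj x y" by blast
  then show ?thesis
  proof cases
    case 3
    obtain w where "w \<in> KK_vertices n" "KK_adj x w" "KK_adj w y"
      using KK_common_neighbour[OF assms] .
    with 3 show ?thesis
      using assms by (simp add: kk_dist_def gdist_eq_2)
  qed (use assms in \<open>simp_all add: kk_dist_def gdist_self gdist_eq_1\<close>)
qed

lemma Delta_set_KK:
  assumes "3 \<le> n" "x \<in> KK_vertices n" "y \<in> KK_vertices n"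
  shows "Delta_set (KK_vertices n) KK_adj (KK_vertices n) x y
           = (\<Sum>z\<in>KK_vertices n. \<bar>int (kk_dist x z) - int (kk_dist y z)\<bar>)"
  unfolding Delta_set_def using assms by (intro sum.cong) (simp_all add: gdist_KK)

lemma Delta_set_KK_swap:
  assumes "3 \<le> n" "x \<in> KK_vertices n" "y \<in> KK_vertices n"
  shows "Delta_set (KK_vertices n) KK_adj (KK_vertices n) (prod.swap x) (prod.swap y)
           = Delta_set (KK_vertices n) KK_adj (KK_vertices n) x y"
proof -
  have swap_V: "prod.swap ` KK_vertices n = KK_vertices n"
    by (auto simp: KK_vertices_def)
  have reindex: "(\<Sum>z\<in>KK_vertices n. h z) = (\<Sum>z\<in>KK_vertices n. h (prod.swap z))"
    for h :: "nat \<times> nat \<Rightarrow> int"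
    using sum.reindex[OF inj_swap, of h "KK_vertices n"] by (simp add: swap_V comp_def)
  have swap_x_y: "prod.swap x \<in> KK_vertices n" "prod.swap y \<in> KK_vertices n"
    using assms swap_V by blast+
  have kk_dist_swap: "kk_dist (prod.swap u) (prod.swap v) = kk_dist u v" for u v
    by (cases u, cases v) (auto simp: kk_dist_def KK_adj_def)
  have "Delta_set (KK_vertices n) KK_adj (KK_vertices n) (prod.swap x) (prod.swap y)
      = (\<Sum>z\<in>KK_vertices n. \<bar>int (kk_dist (prod.swap x) z) - int (kk_dist (prod.swap y) z)\<bar>)"
    using assms(1) swap_x_y by (rule Delta_set_KK)
  also have "\<dots> = (\<Sum>z\<in>KK_vertices n.
      \<bar>int (kk_dist (prod.swap x) (prod.swap z)) - int (kk_dist (prod.swap y) (prod.swap z))\<bar>)"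
    by (rule reindex)
  also have "\<dots> = Delta_set (KK_vertices n) KK_adj (KK_vertices n) x y"
    using assms by (simp add: kk_dist_swap Delta_set_KK)
  finally show ?thesis .
qed

lemma kk_dist_gap_same_row:
  assumes "b \<noteq> d"
  shows "\<bar>int (kk_dist (a, b) z) - int (kk_dist (a, d) z)\<bar>
           = of_bool (snd z \<in> {b, d}) + of_bool (z \<in> {(a, b), (a, d)})"
  using assms by (cases z) (auto simp: kk_dist_def KK_adj_def)

lemma kk_dist_gap_adjacent:
  assumes "a \<noteq> c" "b \<noteq> d"
  shows "\<bar>int (kk_dist (a, b) z) - int (kk_dist (c, d) z)\<bar>
           = of_bool (fst z \<in> {a, c}) + of_bool (snd z \<in> {b, d}) + of_bool (z \<in> {(a, b), (c, d)})
             - 2 * of_bool (z \<in> {a, c} \<times> {b, d})"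
  using assms by (cases z) (auto simp: kk_dist_def KK_adj_def)

lemma finite_KK_vertices: "finite (KK_vertices n)"
  by (simp add: KK_vertices_def)

lemma Delta_set_KK_same_row:
  assumes "3 \<le> n" "a \<in> {1..n}" "b \<in> {1..n}" "d \<in> {1..n}" "b \<noteq> d"
  shows "Delta_set (KK_vertices n) KK_adj (KK_vertices n) (a, b) (a, d) = 2 * int n + 2"
proof -
  have "(a, b) \<in> KK_vertices n" "(a, d) \<in> KK_vertices n"
    using assms by (auto simp: KK_vertices_def)
  then have "Delta_set (KK_vertices n) KK_adj (KK_vertices n) (a, b) (a, d)
      = (\<Sum>z\<in>KK_vertices n. of_bool (snd z \<in> {b, d}) + of_bool (z \<in> {(a, b), (a, d)}))"
    using assms by (simp add: Delta_set_KK kk_dist_gap_same_row)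
  also have "\<dots> = int (card ({1..n} \<times> {b, d})) + int (card {(a, b), (a, d)})"
  proof -
    have "KK_vertices n \<inter> {z. snd z \<in> {b, d}} = {1..n} \<times> {b, d}"
      "KK_vertices n \<inter> {z. z \<in> {(a, b), (a, d)}} = {(a, b), (a, d)}"
      using assms by (auto simp: KK_vertices_def)
    then show ?thesis
      by (simp only: sum.distrib sum_of_bool_eq finite_KK_vertices)
  qed
  also have "\<dots> = 2 * int n + 2"
    using assms by (simp add: card_cartesian_product)
  finally show ?thesis .
qed

lemma Delta_set_KK_adjacent:
  assumes "3 \<le> n" "a \<in> {1..n}" "b \<in> {1..n}" "c \<in> {1..n}" "d \<in> {1..n}"
    and "a \<noteq> c" "b \<noteq> d"
  shows "Delta_set (KK_vertices n) KK_adj (KK_vertices n) (a, b) (c, d) = 4 * int n - 6"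
proof -
  have "(a, b) \<in> KK_vertices n" "(c, d) \<in> KK_vertices n"
    using assms by (auto simp: KK_vertices_def)
  then have "Delta_set (KK_vertices n) KK_adj (KK_vertices n) (a, b) (c, d)
      = (\<Sum>z\<in>KK_vertices n. of_bool (fst z \<in> {a, c}) + of_bool (snd z \<in> {b, d})
           + of_bool (z \<in> {(a, b), (c, d)}) - 2 * of_bool (z \<in> {a, c} \<times> {b, d}))"
    using assms by (simp add: Delta_set_KK kk_dist_gap_adjacent)
  also have "\<dots> = int (card ({a, c} \<times> {1..n})) + int (card ({1..n} \<times> {b, d}))
      + int (card {(a, b), (c, d)}) - 2 * int (card ({a, c} \<times> {b, d}))"
  proof -
    have "KK_vertices n \<inter> {z. fst z \<in> {a, c}} = {a, c} \<times> {1..n}"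
      "KK_vertices n \<inter> {z. snd z \<in> {b, d}} = {1..n} \<times> {b, d}"
      "KK_vertices n \<inter> {z. z \<in> {(a, b), (c, d)}} = {(a, b), (c, d)}"
      "KK_vertices n \<inter> {z. z \<in> {a, c} \<times> {b, d}} = {a, c} \<times> {b, d}"
      using assms by (auto simp: KK_vertices_def)
    then show ?thesis
      by (simp only: sum.distrib sum_subtractf sum_distrib_left[symmetric]
          sum_of_bool_eq finite_KK_vertices)
  qed
  also have "\<dots> = 4 * int n - 6"
    using assms by (simp add: card_cartesian_product)
  finally show ?thesis .
qed

lemma Delta_set_KK_distinct:
  assumes "3 \<le> n" "x \<in> KK_vertices n" "y \<in> KK_vertices n" "x \<noteq> y"
  shows "Delta_set (KK_vertices n) KK_adj (KK_vertices n) x y \<in> {2 * int n + 2, 4 * int n - 6}"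
proof -
  obtain a b c d where xy: "x = (a, b)" "y = (c, d)"
    by fastforce
  with assms have ranges: "a \<in> {1..n}" "b \<in> {1..n}" "c \<in> {1..n}" "d \<in> {1..n}"
    by (auto simp: KK_vertices_def)
  consider "a = c" | "b = d" | "a \<noteq> c" "b \<noteq> d"
    by blast
  then show ?thesis
  proof cases
    case 1
    then show ?thesis
      using assms ranges xy by (simp add: Delta_set_KK_same_row)
  next
    case 2
    then have "Delta_set (KK_vertices n) KK_adj (KK_vertices n) x y
        = Delta_set (KK_vertices n) KK_adj (KK_vertices n) (b, a) (b, c)"
      using assms xy Delta_set_KK_swap[of n x y] by simp
    then show ?thesis
      using 2 assms ranges xy by (simp add: Delta_set_KK_same_row)
  next
    case 3
    then show ?thesis
      using assms ranges xy by (simp add: Delta_set_KK_adjacent)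
  qed
qed

theorem mainTheorem1:
  fixes n :: nat
  assumes "n \<ge> 3"
  shows "kappa (KK_vertices n) KK_adj = (if n = 3 then 6 else 2 * n + 2)"
proof -
  have lower: "int (if n = 3 then 6 else 2 * n + 2)
      \<le> Delta_set (KK_vertices n) KK_adj (KK_vertices n) x y"
    if "x \<in> KK_vertices n" "y \<in> KK_vertices n" "x \<noteq> y" for x y
    using Delta_set_KK_distinct[OF assms that] assms by auto
  consider "n = 3" | "4 \<le> n"
    using assms by linarith
  then show ?thesis
  proof cases
    case 1
    then show ?thesis
      using Delta_set_KK_adjacent[of 3 1 1 2 2]
      by (intro kappa_eqI[OF finite_KK_vertices _ lower, of "(1, 1)" "(2, 2)"])
        (auto simp: KK_vertices_def)
  next
    case 2
    then show ?thesis
      using Delta_set_KK_same_row[OF assms, of 1 1 2]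
      by (intro kappa_eqI[OF finite_KK_vertices _ lower, of "(1, 1)" "(1, 2)"])
        (auto simp: KK_vertices_def)
  qed
qed

end
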